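(* Let $(A,+,\circ)$ be a skew brace and let $t(x_1,\dots,x_n)$ be a term in the language $\{+,-,*,\bar{\ },0\}$ such that no occurrence of the variable $x_1$ lies inside a subterm whose outermost operation is $*$. Then there exists $k\in\mathbb{Z}$ such that $t(x_1+z,x_2,\dots,x_n)=t(x_1,x_2,\dots,x_n)+kz$ for every $z\in\zeta(A)$ and all $x_1,\dots,x_n\in A$.
   Context: A skew brace is a triple $(A,+,\circ)$ where $(A,+)$ and $(A,\circ)$ are groups (not necessarily abelian; $+$ is written additively) such that $x\circ(y+z)=(x\circ y)-x+(x\circ z)$ for all $x,y,z\in A$; the common neutral element is $0$, $-x$ is the $+$-inverse and $\bar x$ the $\circ$-inverse. Let $\lambda_x(y)=-x+(x\circ y)$ and $x*y=-x+(x\circ y)-y$; $[x,y]_+=x+y-x-y$. Terms are built from variables and the constant $0$ using binary $+$, binary $*$, unary $-$ and unary $\bar{\ }$ (note $x\circ y=x+(x*y)+y$, so this language is equivalent to $\{+,-,\circ,\bar{\ },0\}$). The center is $\zeta(A)=\{x\in A: x*y=y*x=[x,y]_+=0\ \forall y\in A\}=\{x\in A: x+y=y+x=x\circ y=y\circ x\ \forall y\in A\}$. For $k\in\mathbb{Z}$, $kz$ denotes the $k$-th multiple of $z$ in $(A,+)$. *)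

theory Defs
  imports Main
begin

definition is_group :: "'a set \<Rightarrow> ('a \<Rightarrow> 'a \<Rightarrow> 'a) \<Rightarrow> 'a \<Rightarrow> ('a \<Rightarrow> 'a) \<Rightarrow> bool" where
  "is_group A f e iv \<longleftrightarrow>
     e \<in> A \<and>
     (\<forall>x\<in>A. \<forall>y\<in>A. f x y \<in> A) \<and>
     (\<forall>x\<in>A. iv x \<in> A) \<and>
     (\<forall>x\<in>A. \<forall>y\<in>A. \<forall>z\<in>A. f (f x y) z = f x (f y z)) \<and>
     (\<forall>x\<in>A. f e x = x \<and> f x e = x) \<and>
     (\<forall>x\<in>A. f (iv x) x = e \<and> f x (iv x) = e)"

definition skew_brace ::
  "'a set \<Rightarrow> ('a \<Rightarrow> 'a \<Rightarrow> 'a) \<Rightarrow> ('a \<Rightarrow> 'a) \<Rightarrow> 'a \<Rightarrow> ('a \<Rightarrow> 'a \<Rightarrow> 'a) \<Rightarrow> ('a \<Rightarrow> 'a) \<Rightarrow> bool" where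
  "skew_brace A add neg zero circ cinv \<longleftrightarrow>
     is_group A add zero neg \<and> is_group A circ zero cinv \<and>
     (\<forall>x\<in>A. \<forall>y\<in>A. \<forall>z\<in>A. circ x (add y z) = add (add (circ x y) (neg x)) (circ x z))"

definition sb_star :: "('a \<Rightarrow> 'a \<Rightarrow> 'a) \<Rightarrow> ('a \<Rightarrow> 'a) \<Rightarrow> ('a \<Rightarrow> 'a \<Rightarrow> 'a) \<Rightarrow> 'a \<Rightarrow> 'a \<Rightarrow> 'a" where
  "sb_star add neg circ x y = add (add (neg x) (circ x y)) (neg y)"

definition sb_comm :: "('a \<Rightarrow> 'a \<Rightarrow> 'a) \<Rightarrow> ('a \<Rightarrow> 'a) \<Rightarrow> 'a \<Rightarrow> 'a \<Rightarrow> 'a" where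
  "sb_comm add neg x y = add (add (add x y) (neg x)) (neg y)"

definition sb_center ::
  "'a set \<Rightarrow> ('a \<Rightarrow> 'a \<Rightarrow> 'a) \<Rightarrow> ('a \<Rightarrow> 'a) \<Rightarrow> 'a \<Rightarrow> ('a \<Rightarrow> 'a \<Rightarrow> 'a) \<Rightarrow> 'a set" where
  "sb_center A add neg zero circ =
     {x \<in> A. \<forall>y\<in>A. sb_star add neg circ x y = zero \<and> sb_star add neg circ y x = zero
                  \<and> sb_comm add neg x y = zero}"

definition int_mult :: "('a \<Rightarrow> 'a \<Rightarrow> 'a) \<Rightarrow> ('a \<Rightarrow> 'a) \<Rightarrow> 'a \<Rightarrow> int \<Rightarrow> 'a \<Rightarrow> 'a" where
  "int_mult add neg zero k z =
     (if 0 \<le> k then ((\<lambda>w. add w z) ^^ nat k) zero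
      else ((\<lambda>w. add w (neg z)) ^^ nat (- k)) zero)"

text \<open>Terms in the language {+, -, *, bar, 0}; variables indexed by nat
  (variable x_1 of the paper is Var 0).\<close>
datatype sbterm = Var nat | Zero | Plus sbterm sbterm | Star sbterm sbterm
  | Neg sbterm | Bar sbterm

fun vars :: "sbterm \<Rightarrow> nat set" where
  "vars (Var i) = {i}"
| "vars Zero = {}"
| "vars (Plus s t) = vars s \<union> vars t"
| "vars (Star s t) = vars s \<union> vars t"
| "vars (Neg s) = vars s"
| "vars (Bar s) = vars s"

fun not_under_star :: "nat \<Rightarrow> sbterm \<Rightarrow> bool" where
  "not_under_star i (Var j) = True"
| "not_under_star i Zero = True"
| "not_under_star i (Plus s t) = (not_under_star i s \<and> not_under_star i t)"
| "not_under_star i (Star s t) = (i \<notin> vars s \<and> i \<notin> vars t)"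
| "not_under_star i (Neg s) = not_under_star i s"
| "not_under_star i (Bar s) = not_under_star i s"

fun sb_eval ::
  "('a \<Rightarrow> 'a \<Rightarrow> 'a) \<Rightarrow> ('a \<Rightarrow> 'a) \<Rightarrow> 'a \<Rightarrow> ('a \<Rightarrow> 'a \<Rightarrow> 'a) \<Rightarrow> ('a \<Rightarrow> 'a)
   \<Rightarrow> (nat \<Rightarrow> 'a) \<Rightarrow> sbterm \<Rightarrow> 'a" where
  "sb_eval add neg zero circ cinv \<rho> (Var i) = \<rho> i"
| "sb_eval add neg zero circ cinv \<rho> Zero = zero"
| "sb_eval add neg zero circ cinv \<rho> (Plus s t) =
     add (sb_eval add neg zero circ cinv \<rho> s) (sb_eval add neg zero circ cinv \<rho> t)"
| "sb_eval add neg zero circ cinv \<rho> (Star s t) =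
     sb_star add neg circ (sb_eval add neg zero circ cinv \<rho> s) (sb_eval add neg zero circ cinv \<rho> t)"
| "sb_eval add neg zero circ cinv \<rho> (Neg s) = neg (sb_eval add neg zero circ cinv \<rho> s)"
| "sb_eval add neg zero circ cinv \<rho> (Bar s) = cinv (sb_eval add neg zero circ cinv \<rho> s)"

end

theory Submission
  imports Defs
begin

text \<open>A central element z satisfies x + z = z + x = x \<circ> z = z \<circ> x. Such elements form a
  subgroup of (A,+), and for central z we have -(x + z) = -x - z and, since x + z = z \<circ> x,
  also that the circle inverse of x + z is the circle inverse of x minus z. Hence shifting a
  variable by z passes through +, - and the circle inverse as an additive multiple of z; inside
  a product * it would get stuck, which the hypothesis excludes.\<close>

locale skew_brace_on =
  fixes A :: "'a set" and add :: "'a \<Rightarrow> 'a \<Rightarrow> 'a" (infixl "\<oplus>" 65)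
    and neg :: "'a \<Rightarrow> 'a" and zero :: 'a and circ :: "'a \<Rightarrow> 'a \<Rightarrow> 'a" and cinv :: "'a \<Rightarrow> 'a"
  assumes skew_brace: "skew_brace A add neg zero circ cinv"
begin

lemma add_group: "is_group A add zero neg"
  and circ_group: "is_group A circ zero cinv"
  and circ_add_distrib:
    "\<And>x y z. x \<in> A \<Longrightarrow> y \<in> A \<Longrightarrow> z \<in> A \<Longrightarrow> circ x (y \<oplus> z) = circ x y \<oplus> neg x \<oplus> circ x z"
  using skew_brace unfolding skew_brace_def by auto

lemma zero_closed [simp]: "zero \<in> A"
  and add_closed [simp]: "x \<in> A \<Longrightarrow> y \<in> A \<Longrightarrow> x \<oplus> y \<in> A"
  and neg_closed [simp]: "x \<in> A \<Longrightarrow> neg x \<in> A"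
  and circ_closed [simp]: "x \<in> A \<Longrightarrow> y \<in> A \<Longrightarrow> circ x y \<in> A"
  and cinv_closed [simp]: "x \<in> A \<Longrightarrow> cinv x \<in> A"
  using add_group circ_group unfolding is_group_def by auto

lemma add_assoc: "x \<in> A \<Longrightarrow> y \<in> A \<Longrightarrow> z \<in> A \<Longrightarrow> x \<oplus> y \<oplus> z = x \<oplus> (y \<oplus> z)"
  and zero_add [simp]: "x \<in> A \<Longrightarrow> zero \<oplus> x = x"
  and add_zero [simp]: "x \<in> A \<Longrightarrow> x \<oplus> zero = x"
  and neg_add_cancel [simp]: "x \<in> A \<Longrightarrow> neg x \<oplus> x = zero"
  and add_neg_cancel [simp]: "x \<in> A \<Longrightarrow> x \<oplus> neg x = zero"
  using add_group unfolding is_group_def by auto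

lemma circ_assoc: "x \<in> A \<Longrightarrow> y \<in> A \<Longrightarrow> z \<in> A \<Longrightarrow> circ (circ x y) z = circ x (circ y z)"
  and zero_circ [simp]: "x \<in> A \<Longrightarrow> circ zero x = x"
  and circ_zero [simp]: "x \<in> A \<Longrightarrow> circ x zero = x"
  and cinv_circ_cancel [simp]: "x \<in> A \<Longrightarrow> circ (cinv x) x = zero"
  and circ_cinv_cancel [simp]: "x \<in> A \<Longrightarrow> circ x (cinv x) = zero"
  using circ_group unfolding is_group_def by auto

lemma add_neg_cancel_left [simp]: "x \<in> A \<Longrightarrow> y \<in> A \<Longrightarrow> x \<oplus> (neg x \<oplus> y) = y"
  by (simp flip: add_assoc)

lemma circ_cinv_cancel_left [simp]: "x \<in> A \<Longrightarrow> y \<in> A \<Longrightarrow> circ x (circ (cinv x) y) = y"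
  by (simp flip: circ_assoc)

lemma add_neg_eq_imp_eq_add: "u \<in> A \<Longrightarrow> y \<in> A \<Longrightarrow> u \<oplus> neg y = v \<Longrightarrow> u = v \<oplus> y"
  by (auto simp: add_assoc)

lemma add_eq_imp_eq_neg_add: "a \<in> A \<Longrightarrow> v \<in> A \<Longrightarrow> a \<oplus> v = y \<Longrightarrow> v = neg a \<oplus> y"
  by (auto simp: add_assoc[symmetric])

lemma neg_unique: "x \<in> A \<Longrightarrow> y \<in> A \<Longrightarrow> x \<oplus> y = zero \<Longrightarrow> neg x = y"
  using add_eq_imp_eq_neg_add[of x y zero] by simp

lemma add_neg_eq_zero_imp_eq: "u \<in> A \<Longrightarrow> y \<in> A \<Longrightarrow> u \<oplus> neg y = zero \<Longrightarrow> u = y"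
  using add_neg_eq_imp_eq_add[of u y zero] by simp

lemma neg_neg [simp]: "x \<in> A \<Longrightarrow> neg (neg x) = x"
  using neg_unique[of "neg x" x] by simp

lemma cinv_unique: "x \<in> A \<Longrightarrow> y \<in> A \<Longrightarrow> circ x y = zero \<Longrightarrow> cinv x = y"
  using circ_assoc[of "cinv x" x y] by simp

definition central :: "'a \<Rightarrow> bool" where
  "central w \<longleftrightarrow> w \<in> A \<and> (\<forall>y\<in>A. y \<oplus> w = w \<oplus> y \<and> circ y w = y \<oplus> w \<and> circ w y = w \<oplus> y)"

lemma central_closed: "central w \<Longrightarrow> w \<in> A"
  unfolding central_def by auto

lemma centralD:
  assumes "central w" "y \<in> A"
  shows "y \<oplus> w = w \<oplus> y" "circ y w = y \<oplus> w" "circ w y = w \<oplus> y"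
  using assms unfolding central_def by auto

lemma central_if_in_sb_center:
  assumes z: "z \<in> sb_center A add neg zero circ"
  shows "central z"
  unfolding central_def
proof (intro conjI ballI)
  show zA: "z \<in> A" using z unfolding sb_center_def by auto
  fix y assume y: "y \<in> A"
  have "neg z \<oplus> circ z y \<oplus> neg y = zero" and "neg y \<oplus> circ y z \<oplus> neg z = zero"
    and "z \<oplus> y \<oplus> neg z \<oplus> neg y = zero"
    using z y unfolding sb_center_def sb_star_def sb_comm_def by auto
  then have "neg z \<oplus> circ z y = y" and "neg y \<oplus> circ y z = z" and "z \<oplus> y \<oplus> neg z = y"
    using zA y add_neg_eq_zero_imp_eq by simp_all
  then show "circ z y = z \<oplus> y" and "circ y z = y \<oplus> z" and "y \<oplus> z = z \<oplus> y"
    using zA y add_eq_imp_eq_neg_add[of "neg z" "circ z y"] add_eq_imp_eq_neg_add[of "neg y" "circ y z"]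
      add_neg_eq_imp_eq_add[of "z \<oplus> y" z y] by simp_all
qed

lemma central_zero: "central zero"
  unfolding central_def by simp

lemma central_add:
  assumes a: "central a" and b: "central b"
  shows "central (a \<oplus> b)"
proof -
  have aA: "a \<in> A" and bA: "b \<in> A" using a b by (simp_all add: central_closed)
  have "y \<oplus> (a \<oplus> b) = a \<oplus> b \<oplus> y \<and> circ y (a \<oplus> b) = y \<oplus> (a \<oplus> b) \<and> circ (a \<oplus> b) y = a \<oplus> b \<oplus> y"
    if y: "y \<in> A" for y
  proof (intro conjI)
    show comm: "y \<oplus> (a \<oplus> b) = a \<oplus> b \<oplus> y"
      using aA bA y centralD(1)[OF a y] centralD(1)[OF b y] by (metis add_assoc)
    have "circ y (a \<oplus> b) = y \<oplus> a \<oplus> neg y \<oplus> (y \<oplus> b)"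
      using circ_add_distrib[OF y aA bA] centralD(2)[OF a y] centralD(2)[OF b y] by simp
    also have "\<dots> = a \<oplus> (b \<oplus> y)"
      using aA bA y centralD(1)[OF a y] by (simp add: add_assoc centralD(1)[OF b y])
    finally show "circ y (a \<oplus> b) = y \<oplus> (a \<oplus> b)"
      using comm aA bA y by (simp add: add_assoc)
    have "circ (a \<oplus> b) y = circ (circ a b) y"
      using centralD(3)[OF a bA] by simp
    also have "\<dots> = circ a (circ b y)"
      using aA bA y by (simp add: circ_assoc)
    finally have "circ (a \<oplus> b) y = circ a (circ b y)" .
    then show "circ (a \<oplus> b) y = a \<oplus> b \<oplus> y"
      using aA bA y centralD(3)[OF a] centralD(3)[OF b y] by (simp add: add_assoc)
  qed
  with aA bA show ?thesis unfolding central_def by simp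
qed

lemma central_neg:
  assumes a: "central a"
  shows "central (neg a)"
proof -
  have aA: "a \<in> A" using a by (rule central_closed)
  have "y \<oplus> neg a = neg a \<oplus> y \<and> circ y (neg a) = y \<oplus> neg a \<and> circ (neg a) y = neg a \<oplus> y"
    if y: "y \<in> A" for y
  proof (intro conjI)
    have "neg a \<oplus> y = neg a \<oplus> (y \<oplus> a) \<oplus> neg a"
      using aA y by (simp add: add_assoc)
    then show comm: "y \<oplus> neg a = neg a \<oplus> y"
      using aA y centralD(1)[OF a y] by (simp add: add_assoc[symmetric])
    have "y = circ y (a \<oplus> neg a)" using aA y by simp
    also have "\<dots> = a \<oplus> circ y (neg a)"
      using circ_add_distrib[OF y aA, of "neg a"] centralD(1,2)[OF a y] aA y by (simp add: add_assoc)
    finally show "circ y (neg a) = y \<oplus> neg a"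
      using comm add_eq_imp_eq_neg_add[of a "circ y (neg a)" y] aA y by simp
    have "a \<oplus> circ (neg a) y = circ a (circ (neg a) y)"
      using centralD(3)[OF a] aA y by simp
    also have "\<dots> = y"
      using centralD(3)[OF a] aA y by (simp add: circ_assoc[symmetric])
    finally show "circ (neg a) y = neg a \<oplus> y"
      using add_eq_imp_eq_neg_add aA y by simp
  qed
  with aA show ?thesis unfolding central_def by simp
qed

lemma neg_add_central:
  assumes w: "central w" and x: "x \<in> A"
  shows "neg (x \<oplus> w) = neg x \<oplus> neg w"
proof (rule neg_unique)
  have wA: "w \<in> A" using w by (rule central_closed)
  have "x \<oplus> w \<oplus> (neg x \<oplus> neg w) = w \<oplus> x \<oplus> (neg x \<oplus> neg w)"
    using centralD(1)[OF w x] by simp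
  also have "\<dots> = zero" using wA x by (simp add: add_assoc)
  finally show "x \<oplus> w \<oplus> (neg x \<oplus> neg w) = zero" .
qed (use w x central_closed in auto)

lemma cinv_add_central:
  assumes w: "central w" and x: "x \<in> A"
  shows "cinv (x \<oplus> w) = cinv x \<oplus> neg w"
proof -
  have wA: "w \<in> A" using w by (rule central_closed)
  have "circ (circ w x) (circ (cinv x) (neg w)) = circ w (neg w)"
    using wA x by (simp add: circ_assoc)
  also have "\<dots> = zero" using centralD(3)[OF w] wA by simp
  finally have "cinv (circ w x) = circ (cinv x) (neg w)"
    using cinv_unique wA x by simp
  then show ?thesis
    using centralD(3)[OF w x] centralD(1)[OF w x] centralD(2)[OF central_neg[OF w]] x by simp
qed

lemma add_add_central:
  assumes "central w\<^sub>1" "central w\<^sub>2" "a \<in> A" "b \<in> A"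
  shows "a \<oplus> w\<^sub>1 \<oplus> (b \<oplus> w\<^sub>2) = a \<oplus> b \<oplus> (w\<^sub>1 \<oplus> w\<^sub>2)"
proof -
  have w: "w\<^sub>1 \<in> A" "w\<^sub>2 \<in> A" using assms(1,2) by (simp_all add: central_closed)
  have "a \<oplus> w\<^sub>1 \<oplus> (b \<oplus> w\<^sub>2) = a \<oplus> (w\<^sub>1 \<oplus> b) \<oplus> w\<^sub>2"
    using w assms(3,4) by (simp add: add_assoc)
  also have "\<dots> = a \<oplus> (b \<oplus> w\<^sub>1) \<oplus> w\<^sub>2"
    using centralD(1)[OF assms(1,4)] by simp
  finally show ?thesis using w assms(3,4) by (simp add: add_assoc)
qed

abbreviation mult :: "int \<Rightarrow> 'a \<Rightarrow> 'a" where
  "mult k z \<equiv> int_mult add neg zero k z"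

lemma funpow_add_closed: "z \<in> A \<Longrightarrow> ((\<lambda>w. w \<oplus> z) ^^ n) zero \<in> A"
  by (induction n) auto

lemma mult_closed: "z \<in> A \<Longrightarrow> mult k z \<in> A"
  unfolding int_mult_def using funpow_add_closed[of z] funpow_add_closed[of "neg z"] by auto

lemma mult_0 [simp]: "mult 0 z = zero"
  and mult_1: "z \<in> A \<Longrightarrow> mult 1 z = z"
  unfolding int_mult_def by simp_all

lemma mult_succ:
  assumes z: "z \<in> A"
  shows "mult (k + 1) z = mult k z \<oplus> z"
proof (cases "k \<ge> 0")
  case True
  then have "nat (k + 1) = Suc (nat k)" by simp
  with True show ?thesis unfolding int_mult_def by simp
next
  case False
  let ?f = "\<lambda>w. w \<oplus> neg z"
  have "mult (k + 1) z = (?f ^^ nat (- (k + 1))) zero"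
    using False unfolding int_mult_def by (cases "k = -1") auto
  moreover have "nat (- k) = Suc (nat (- (k + 1)))"
    using False by simp
  ultimately have "mult k z = mult (k + 1) z \<oplus> neg z"
    using False unfolding int_mult_def by simp
  then show ?thesis using add_neg_eq_imp_eq_add mult_closed z by simp
qed

lemma mult_pred: "z \<in> A \<Longrightarrow> mult (k - 1) z = mult k z \<oplus> neg z"
  using mult_succ[of z "k - 1"] mult_closed by (simp add: add_assoc)

lemma mult_add:
  assumes z: "z \<in> A"
  shows "mult k z \<oplus> mult l z = mult (k + l) z"
proof (induction l rule: int_induct[where k = 0])
  case (step1 i)
  have "mult k z \<oplus> mult (i + 1) z = mult k z \<oplus> mult i z \<oplus> z"
    using mult_succ mult_closed z by (simp add: add_assoc)
  also have "\<dots> = mult (k + i + 1) z"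
    using step1 mult_succ z by simp
  finally show ?case by (simp add: add.assoc)
next
  case (step2 i)
  have "mult k z \<oplus> mult (i - 1) z = mult k z \<oplus> mult i z \<oplus> neg z"
    using mult_pred mult_closed z by (simp add: add_assoc)
  also have "\<dots> = mult (k + i - 1) z"
    using step2 mult_pred z by simp
  finally show ?case by (simp add: add_diff_eq)
qed (simp add: mult_closed z)

lemma mult_uminus: "z \<in> A \<Longrightarrow> mult (- k) z = neg (mult k z)"
  using neg_unique[of "mult k z" "mult (- k) z"] mult_add[of z k "- k"] mult_closed by simp

lemma central_mult:
  assumes z: "central z"
  shows "central (mult k z)"
proof (induction k rule: int_induct[where k = 0])
  case (step1 i)
  then show ?case
    using central_add[OF _ z] mult_succ[OF central_closed[OF z], of i] by metis
next
  case (step2 i)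
  then show ?case
    using central_add[OF _ central_neg[OF z]] mult_pred[OF central_closed[OF z], of i] by metis
qed (simp add: central_zero)

end

lemma eval_upd_notin_vars:
  "i \<notin> vars t \<Longrightarrow> sb_eval add neg zero circ cinv (\<rho>(i := x)) t = sb_eval add neg zero circ cinv \<rho> t"
  by (induction t) auto

fun shift_coeff :: "nat \<Rightarrow> sbterm \<Rightarrow> int" where
  "shift_coeff i (Var j) = (if j = i then 1 else 0)"
| "shift_coeff i Zero = 0"
| "shift_coeff i (Plus s t) = shift_coeff i s + shift_coeff i t"
| "shift_coeff i (Star s t) = 0"
| "shift_coeff i (Neg s) = - shift_coeff i s"
| "shift_coeff i (Bar s) = - shift_coeff i s"

context skew_brace_on
begin

abbreviation eval :: "(nat \<Rightarrow> 'a) \<Rightarrow> sbterm \<Rightarrow> 'a" where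
  "eval \<equiv> sb_eval add neg zero circ cinv"

lemma eval_closed: "(\<And>i. \<rho> i \<in> A) \<Longrightarrow> eval \<rho> t \<in> A"
  by (induction t) (auto simp: sb_star_def)

lemma eval_shift_central:
  assumes "not_under_star i t" and z: "central z" and \<rho>: "\<And>j. \<rho> j \<in> A"
  shows "eval (\<rho>(i := \<rho> i \<oplus> z)) t = eval \<rho> t \<oplus> mult (shift_coeff i t) z"
  using assms(1)
proof (induction t)
  case (Var j)
  then show ?case using mult_1 \<rho> central_closed[OF z] by auto
next
  case (Plus s t)
  then show ?case
    using add_add_central[OF central_mult[OF z] central_mult[OF z] eval_closed[of \<rho>, OF \<rho>]
        eval_closed[of \<rho>, OF \<rho>]] mult_add[OF central_closed[OF z]]
    by simp
next
  case (Star s t)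
  then have "eval (\<rho>(i := \<rho> i \<oplus> z)) (Star s t) = eval \<rho> (Star s t)"
    by (intro eval_upd_notin_vars) simp
  with eval_closed[of \<rho> "Star s t", OF \<rho>] show ?case by (simp add: fun_upd_def)
next
  case (Neg s)
  then show ?case
    by (simp add: neg_add_central central_mult z eval_closed \<rho> mult_uminus central_closed)
next
  case (Bar s)
  then show ?case
    by (simp add: cinv_add_central central_mult z eval_closed \<rho> mult_uminus central_closed)
qed (use eval_closed \<rho> in simp)

end

theorem mainTheorem15:
  fixes A :: "'a set" and add circ :: "'a \<Rightarrow> 'a \<Rightarrow> 'a" and neg cinv :: "'a \<Rightarrow> 'a"
    and zero :: 'a and t :: sbterm
  assumes "skew_brace A add neg zero circ cinv"
    and "not_under_star 0 t"
  shows "\<exists>k::int. \<forall>z \<in> sb_center A add neg zero circ. \<forall>\<rho>. (\<forall>i. \<rho> i \<in> A) \<longrightarrow>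
           sb_eval add neg zero circ cinv (\<rho>(0 := add (\<rho> 0) z)) t =
           add (sb_eval add neg zero circ cinv \<rho> t) (int_mult add neg zero k z)"
proof -
  interpret skew_brace_on A add neg zero circ cinv
    using assms(1) by unfold_locales
  show ?thesis
    using eval_shift_central[OF assms(2) central_if_in_sb_center] by blast
qed

end
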